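(* Let $(E,C)$ be a finite bipartite separated graph and $H\in\mathcal H(E,C)$. Put $$H_1:=\bigcup\{s_1(X(x)):x\in E^1,\ s(x)\in H\}\ \cup\ (H\cap E_1^{0,0}).$$ Then $H_1\in\mathcal H(E_1,C^1)$, and $H\cup H_1\in\mathcal H(F_1,D^1)$ is the hereditary closure of $H$ inside $(F_1,D^1)$.
   Context: A separated graph $(E,C)$: directed graph $E=(E^0,E^1,r,s)$ with $C=\bigsqcup_vC_v$, $C_v$ a partition of $r^{-1}(v)$ into non-empty sets. Finite bipartite: $E$ finite, $E^0=E^{0,0}\sqcup E^{0,1}$, $s(E^1)=E^{0,1}$, $r(E^1)=E^{0,0}$. Write $C_u=\{X^u_1,\dots,X^u_{k_u}\}$ for $u\in E^{0,0}$. $(E_1,C^1)$ has $E_1^{0,0}=E^{0,1}$, $E_1^{0,1}=\{v(x_1,\dots,x_{k_u}):u\in E^{0,0},x_j\in X^u_j\}$, edges $\alpha^{x_i}(x_1,\dots,\widehat{x_i},\dots,x_{k_u})$ ($1\le i\le k_u$) with range $r_1=s(x_i)$ and source $s_1=v(x_1,\dots,x_{k_u})$, and $C^1_v=\{X(x):x\in s^{-1}(v)\}$ where $X(x_i)=\{\alpha^{x_i}(x_1,\dots,\widehat{x_i},\dots,x_{k_u}):x_j\in X^u_j\ (j\ne i)\}$. $(F_1,D^1)$ is the separated graph $(E,C)\cup(E_1,C^1)$ obtained by identifying $E^{0,1}$ with $E_1^{0,0}$. For a separated graph $(F,D)$, $H\subseteq F^0$ is hereditary if $r(e)\in H$ implies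 $s(e)\in H$, and $D$-saturated if, for $v\in F^0$ and $X\in D_v$, $s(X)\subseteq H$ implies $v\in H$; $\mathcal H(F,D)$ denotes the set of hereditary $D$-saturated subsets. *)

theory Defs
  imports Main
begin

definition separated_graph ::
  "'v set \<Rightarrow> 'e set \<Rightarrow> ('e \<Rightarrow> 'v) \<Rightarrow> ('e \<Rightarrow> 'v) \<Rightarrow> ('v \<Rightarrow> 'e set set) \<Rightarrow> bool" where
  "separated_graph V Ed r s C \<longleftrightarrow>
     (\<forall>e\<in>Ed. r e \<in> V \<and> s e \<in> V) \<and>
     (\<forall>v\<in>V. (\<forall>X\<in>C v. X \<noteq> {}) \<and> \<Union>(C v) = {e\<in>Ed. r e = v} \<and> pairwise disjnt (C v))"

definition finite_bipartite_sep ::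
  "'v set \<Rightarrow> 'e set \<Rightarrow> ('e \<Rightarrow> 'v) \<Rightarrow> ('e \<Rightarrow> 'v) \<Rightarrow> ('v \<Rightarrow> 'e set set) \<Rightarrow> 'v set \<Rightarrow> 'v set \<Rightarrow> bool" where
  "finite_bipartite_sep V Ed r s C V0 V1 \<longleftrightarrow>
     separated_graph V Ed r s C \<and> finite V \<and> finite Ed \<and>
     V = V0 \<union> V1 \<and> V0 \<inter> V1 = {} \<and> s ` Ed \<subseteq> V1 \<and> r ` Ed \<subseteq> V0"

definition hereditary :: "'e set \<Rightarrow> ('e \<Rightarrow> 'v) \<Rightarrow> ('e \<Rightarrow> 'v) \<Rightarrow> 'v set \<Rightarrow> bool" where
  "hereditary Ed r s H \<longleftrightarrow> (\<forall>e\<in>Ed. r e \<in> H \<longrightarrow> s e \<in> H)"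

definition saturated :: "'v set \<Rightarrow> ('e \<Rightarrow> 'v) \<Rightarrow> ('v \<Rightarrow> 'e set set) \<Rightarrow> 'v set \<Rightarrow> bool" where
  "saturated V s C H \<longleftrightarrow> (\<forall>v\<in>V. \<forall>X\<in>C v. s ` X \<subseteq> H \<longrightarrow> v \<in> H)"

definition HS ::
  "'v set \<Rightarrow> 'e set \<Rightarrow> ('e \<Rightarrow> 'v) \<Rightarrow> ('e \<Rightarrow> 'v) \<Rightarrow> ('v \<Rightarrow> 'e set set) \<Rightarrow> 'v set set" where
  "HS V Ed r s C = {H. H \<subseteq> V \<and> hereditary Ed r s H \<and> saturated V s C H}"

definition hered_closure :: "'v set \<Rightarrow> 'e set \<Rightarrow> ('e \<Rightarrow> 'v) \<Rightarrow> ('e \<Rightarrow> 'v) \<Rightarrow> 'v set \<Rightarrow> 'v set" where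
  "hered_closure V Ed r s A = \<Inter>{K. A \<subseteq> K \<and> K \<subseteq> V \<and> hereditary Ed r s K}"

text \<open>A tuple (x_1,...,x_k_u) with x_j in X^u_j is encoded as (u, S) with S = {x_1,...,x_k_u},
  a transversal of the partition C u.  Vertices of F_1: Inl v (old vertices of E) and
  Inr (u,S) (new vertices v(x_1,...,x_k_u)).  Edges of F_1: Inl e (old edges) and
  Inr (x_i, (u,S)) encoding alpha^{x_i}(x_1,..,hat x_i,..,x_k_u).\<close>

definition transversals :: "('v \<Rightarrow> 'e set set) \<Rightarrow> 'v \<Rightarrow> 'e set set" where
  "transversals C u = {S. S \<subseteq> \<Union>(C u) \<and> (\<forall>X\<in>C u. \<exists>!x. x \<in> S \<and> x \<in> X)}"

type_synonym ('v,'e) newv = "'v \<times> 'e set"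
type_synonym ('v,'e) F1v = "'v + ('v,'e) newv"
type_synonym ('v,'e) F1e = "'e + ('e \<times> ('v,'e) newv)"

definition E1_new_vertices :: "('v \<Rightarrow> 'e set set) \<Rightarrow> 'v set \<Rightarrow> ('v,'e) F1v set" where
  "E1_new_vertices C V0 = {Inr (u, S) | u S. u \<in> V0 \<and> S \<in> transversals C u}"

definition E1_vertices :: "('v \<Rightarrow> 'e set set) \<Rightarrow> 'v set \<Rightarrow> 'v set \<Rightarrow> ('v,'e) F1v set" where
  "E1_vertices C V0 V1 = Inl ` V1 \<union> E1_new_vertices C V0"

definition E1_edges :: "('v \<Rightarrow> 'e set set) \<Rightarrow> 'v set \<Rightarrow> ('v,'e) F1e set" where
  "E1_edges C V0 = {Inr (x, (u, S)) | x u S. u \<in> V0 \<and> S \<in> transversals C u \<and> x \<in> S}"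

text \<open>range and source maps of F_1 (restricting to E_1 edges gives r_1, s_1)\<close>
definition F1_r :: "('e \<Rightarrow> 'v) \<Rightarrow> ('e \<Rightarrow> 'v) \<Rightarrow> ('v,'e) F1e \<Rightarrow> ('v,'e) F1v" where
  "F1_r r s f = (case f of Inl e \<Rightarrow> Inl (r e) | Inr (x, p) \<Rightarrow> Inl (s x))"

definition F1_s :: "('e \<Rightarrow> 'v) \<Rightarrow> ('v,'e) F1e \<Rightarrow> ('v,'e) F1v" where
  "F1_s s f = (case f of Inl e \<Rightarrow> Inl (s e) | Inr (x, p) \<Rightarrow> Inr p)"

definition Xset :: "('e \<Rightarrow> 'v) \<Rightarrow> ('v \<Rightarrow> 'e set set) \<Rightarrow> 'e \<Rightarrow> ('v,'e) F1e set" where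
  "Xset r C x = {Inr (x, (r x, S)) | S. S \<in> transversals C (r x) \<and> x \<in> S}"

definition C1 ::
  "'e set \<Rightarrow> ('e \<Rightarrow> 'v) \<Rightarrow> ('e \<Rightarrow> 'v) \<Rightarrow> ('v \<Rightarrow> 'e set set) \<Rightarrow> 'v set \<Rightarrow> ('v,'e) F1v \<Rightarrow> ('v,'e) F1e set set" where
  "C1 Ed r s C V1 w = (case w of
      Inl v \<Rightarrow> (if v \<in> V1 then {Xset r C x | x. x \<in> Ed \<and> s x = v} else {})
    | Inr _ \<Rightarrow> {})"

definition F1_vertices :: "'v set \<Rightarrow> ('v \<Rightarrow> 'e set set) \<Rightarrow> 'v set \<Rightarrow> ('v,'e) F1v set" where
  "F1_vertices V C V0 = Inl ` V \<union> E1_new_vertices C V0"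

definition F1_edges :: "'e set \<Rightarrow> ('v \<Rightarrow> 'e set set) \<Rightarrow> 'v set \<Rightarrow> ('v,'e) F1e set" where
  "F1_edges Ed C V0 = Inl ` Ed \<union> E1_edges C V0"

text \<open>D^1 = C on E^{0,0} and C^1 on E^{0,1} = E_1^{0,0}; empty on new vertices.\<close>
definition D1 ::
  "'e set \<Rightarrow> ('e \<Rightarrow> 'v) \<Rightarrow> ('e \<Rightarrow> 'v) \<Rightarrow> ('v \<Rightarrow> 'e set set) \<Rightarrow> 'v set \<Rightarrow> ('v,'e) F1v \<Rightarrow> ('v,'e) F1e set set" where
  "D1 Ed r s C V1 w = (case w of
      Inl v \<Rightarrow> (if v \<in> V1 then C1 Ed r s C V1 w else (\<lambda>X. Inl ` X) ` C v)
    | Inr _ \<Rightarrow> {})"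

end

theory Submission
  imports Defs
begin

text \<open>A vertex \<open>v(x\<^sub>1,\<dots>,x\<^sub>k)\<close> of \<open>E\<^sub>1\<close> lies in the hereditary closure of \<open>H\<close> exactly when some
  \<open>s(x\<^sub>i)\<close> lies in \<open>H\<close>, so the closure of \<open>H\<close> in \<open>F\<^sub>1\<close> is \<open>H \<union> H\<^sub>1\<close> and heredity is immediate.
  For saturation, let \<open>s(x) \<notin> H\<close> for an edge \<open>x\<close> with range \<open>u\<close>. Then \<open>u \<notin> H\<close>, so by
  saturation of \<open>H\<close> every \<open>X \<in> C\<^sub>u\<close> contains an edge with source outside \<open>H\<close>; choosing one in each
  member (and \<open>x\<close> in its own) gives a vertex \<open>v(\<dots>,x,\<dots>)\<close> outside \<open>H\<^sub>1\<close>, so \<open>X(x)\<close> is not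
  contained in \<open>H\<^sub>1\<close>.\<close>

lemma transversal_through:
  assumes sep: "separated_graph V Ed r s C" and u: "u \<in> V"
    and x: "x \<in> Ed" "r x = u" "P x"
    and witnesses: "\<forall>X\<in>C u. \<exists>y\<in>X. P y"
  shows "\<exists>S\<in>transversals C u. x \<in> S \<and> (\<forall>y\<in>S. P y)"
proof -
  have parts: "\<Union>(C u) = {e\<in>Ed. r e = u}" and disj: "pairwise disjnt (C u)"
    using sep u unfolding separated_graph_def by auto
  define f where "f X = (if x \<in> X then x else SOME y. y \<in> X \<and> P y)" for X
  have f: "f X \<in> X \<and> P (f X)" if X: "X \<in> C u" for X
  proof (cases "x \<in> X")
    case True
    with x(3) show ?thesis by (simp add: f_def)
  next
    case False
    from witnesses X have "\<exists>y. y \<in> X \<and> P y" by blast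
    then have "(SOME y. y \<in> X \<and> P y) \<in> X \<and> P (SOME y. y \<in> X \<and> P y)" by (rule someI_ex)
    with False show ?thesis by (simp add: f_def)
  qed
  have "f ` C u \<in> transversals C u"
    unfolding transversals_def
  proof (intro CollectI conjI ballI)
    show "f ` C u \<subseteq> \<Union>(C u)" using f by blast
  next
    fix X assume X: "X \<in> C u"
    show "\<exists>!y. y \<in> f ` C u \<and> y \<in> X"
    proof (rule ex1I[of _ "f X"])
      show "f X \<in> f ` C u \<and> f X \<in> X" using X f by blast
    next
      fix y assume y: "y \<in> f ` C u \<and> y \<in> X"
      then obtain Y where Y: "Y \<in> C u" "y = f Y" by blast
      with f have "y \<in> Y" by blast
      with disj X Y(1) y have "Y = X" unfolding pairwise_def disjnt_def by blast
      with Y show "y = f X" by simp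
    qed
  qed
  moreover have "x \<in> f ` C u"
  proof -
    obtain X where X: "X \<in> C u" "x \<in> X" using parts x by blast
    then have "f X = x" by (simp add: f_def)
    with X(1) show ?thesis by blast
  qed
  moreover have "\<forall>y\<in>f ` C u. P y" using f by blast
  ultimately show ?thesis by blast
qed

lemma transversal_mem_edge:
  assumes "separated_graph V Ed r s C" "u \<in> V" "S \<in> transversals C u" "x \<in> S"
  shows "x \<in> Ed \<and> r x = u"
proof -
  have "x \<in> \<Union>(C u)" using assms(3,4) by (auto simp: transversals_def)
  moreover have "\<Union>(C u) = {e\<in>Ed. r e = u}"
    using assms(1,2) by (simp add: separated_graph_def)
  ultimately show ?thesis by blast
qed

definition lift_to_E1 ::
  "'e set \<Rightarrow> ('e \<Rightarrow> 'v) \<Rightarrow> ('e \<Rightarrow> 'v) \<Rightarrow> ('v \<Rightarrow> 'e set set) \<Rightarrow> 'v set \<Rightarrow> 'v set \<Rightarrow> ('v,'e) F1v set"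
  where "lift_to_E1 Ed r s C V1 H =
    \<Union>{F1_s s ` Xset r C x | x. x \<in> Ed \<and> s x \<in> H} \<union> Inl ` (H \<inter> V1)"

lemma F1_s_image_Xset:
  "F1_s s ` Xset r C x = {Inr (r x, S) | S. S \<in> transversals C (r x) \<and> x \<in> S}"
  unfolding Xset_def F1_s_def by force

lemma mem_lift_to_E1:
  "w \<in> lift_to_E1 Ed r s C V1 H \<longleftrightarrow> (\<exists>v. w = Inl v \<and> v \<in> H \<and> v \<in> V1) \<or>
     (\<exists>x S. w = Inr (r x, S) \<and> x \<in> Ed \<and> s x \<in> H \<and> S \<in> transversals C (r x) \<and> x \<in> S)"
  unfolding lift_to_E1_def F1_s_image_Xset by blast

lemma Inl_mem_lift_to_E1 [simp]:
  "Inl v \<in> lift_to_E1 Ed r s C V1 H \<longleftrightarrow> v \<in> H \<and> v \<in> V1"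
  by (simp add: mem_lift_to_E1)

lemma Inr_mem_lift_to_E1 [simp]:
  "Inr (u, S) \<in> lift_to_E1 Ed r s C V1 H \<longleftrightarrow>
     S \<in> transversals C u \<and> (\<exists>x\<in>S. x \<in> Ed \<and> r x = u \<and> s x \<in> H)"
  by (auto simp: mem_lift_to_E1)

locale bipartite_separated_graph =
  fixes V :: "'v set" and Ed :: "'e set" and r s :: "'e \<Rightarrow> 'v"
    and C :: "'v \<Rightarrow> 'e set set" and V0 V1 :: "'v set"
  assumes separated: "separated_graph V Ed r s C"
    and vertices: "V = V0 \<union> V1"
    and sources: "s ` Ed \<subseteq> V1" and ranges: "r ` Ed \<subseteq> V0"
begin

abbreviation lift :: "'v set \<Rightarrow> ('v,'e) F1v set"
  where "lift H \<equiv> lift_to_E1 Ed r s C V1 H"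

lemma V0_transversal_mem_edge:
  assumes "u \<in> V0" "S \<in> transversals C u" "x \<in> S"
  shows "x \<in> Ed \<and> r x = u"
  using transversal_mem_edge[OF separated] assms vertices by blast

lemma lift_to_E1_subset: "lift H \<subseteq> E1_vertices C V0 V1"
proof
  fix w assume w: "w \<in> lift H"
  show "w \<in> E1_vertices C V0 V1"
  proof (cases w)
    case (Inl v) with w show ?thesis by (simp add: E1_vertices_def)
  next
    case (Inr p)
    with w ranges show ?thesis
      by (cases p) (auto simp: E1_vertices_def E1_new_vertices_def)
  qed
qed

lemma F1_s_image_Xset_subset_lift_iff:
  assumes "hereditary Ed r s H" "saturated V s C H" and x: "x \<in> Ed"
  shows "F1_s s ` Xset r C x \<subseteq> lift H \<longleftrightarrow> s x \<in> H"
proof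
  assume sub: "F1_s s ` Xset r C x \<subseteq> lift H"
  show "s x \<in> H"
  proof (rule ccontr)
    assume sx: "s x \<notin> H"
    have u: "r x \<in> V" using ranges x vertices by auto
    have "r x \<notin> H" using assms x sx unfolding hereditary_def by blast
    then have "\<forall>X\<in>C (r x). \<exists>y\<in>X. s y \<notin> H"
      using assms(2) u unfolding saturated_def by blast
    then obtain S where S: "S \<in> transversals C (r x)" "x \<in> S" "\<forall>y\<in>S. s y \<notin> H"
      using transversal_through[where P = "\<lambda>y. s y \<notin> H", OF separated u x refl sx] by blast
    then have "Inr (r x, S) \<in> F1_s s ` Xset r C x" unfolding F1_s_image_Xset by blast
    with sub have "Inr (r x, S) \<in> lift H" by blast
    then have "\<exists>y\<in>S. s y \<in> H" by auto
    with S(3) show False by blast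
  qed
next
  assume sx: "s x \<in> H"
  have "Inr (r x, S) \<in> lift H" if "S \<in> transversals C (r x)" "x \<in> S" for S
    unfolding Inr_mem_lift_to_E1 using x sx that by blast
  then show "F1_s s ` Xset r C x \<subseteq> lift H"
    unfolding F1_s_image_Xset by blast
qed

lemma lift_to_E1_in_HS:
  assumes "hereditary Ed r s H" "saturated V s C H"
  shows "lift H \<in> HS (E1_vertices C V0 V1) (E1_edges C V0) (F1_r r s) (F1_s s) (C1 Ed r s C V1)"
proof -
  have "hereditary (E1_edges C V0) (F1_r r s) (F1_s s) (lift H)"
    unfolding hereditary_def E1_edges_def
  proof clarify
    fix x u S assume u: "u \<in> V0" and S: "S \<in> transversals C u" and x: "x \<in> S"
      and "F1_r r s (Inr (x, u, S)) \<in> lift H"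
    then have "s x \<in> H" by (simp add: F1_r_def)
    with V0_transversal_mem_edge[OF u S x] S x show "F1_s s (Inr (x, u, S)) \<in> lift H"
      by (auto simp: F1_s_def)
  qed
  moreover have "saturated (E1_vertices C V0 V1) (F1_s s) (C1 Ed r s C V1) (lift H)"
    unfolding saturated_def
  proof (intro ballI impI)
    fix w X assume X: "X \<in> C1 Ed r s C V1 w" and sub: "F1_s s ` X \<subseteq> lift H"
    then obtain x where "w = Inl (s x)" "s x \<in> V1" "X = Xset r C x" "x \<in> Ed"
      by (auto simp: C1_def split: sum.splits if_splits)
    with sub F1_s_image_Xset_subset_lift_iff[OF assms] show "w \<in> lift H" by simp
  qed
  ultimately show ?thesis using lift_to_E1_subset by (simp add: HS_def)
qed

lemma union_lift_hereditary:
  assumes "hereditary Ed r s H"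
  shows "hereditary (F1_edges Ed C V0) (F1_r r s) (F1_s s) (Inl ` H \<union> lift H)"
  unfolding hereditary_def
proof (intro ballI impI)
  fix f assume f: "f \<in> F1_edges Ed C V0" and rf: "F1_r r s f \<in> Inl ` H \<union> lift H"
  show "F1_s s f \<in> Inl ` H \<union> lift H"
  proof (cases f)
    case (Inl e)
    with f rf assms show ?thesis
      by (auto simp: F1_edges_def E1_edges_def F1_r_def F1_s_def hereditary_def)
  next
    case Inr
    then obtain x u S where f': "f = Inr (x, (u, S))" "u \<in> V0" "S \<in> transversals C u" "x \<in> S"
      using f by (auto simp: F1_edges_def E1_edges_def)
    with rf V0_transversal_mem_edge show ?thesis
      by (auto simp: F1_r_def F1_s_def)
  qed
qed

lemma union_lift_saturated:
  assumes "hereditary Ed r s H" "saturated V s C H"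
  shows "saturated (F1_vertices V C V0) (F1_s s) (D1 Ed r s C V1) (Inl ` H \<union> lift H)"
  unfolding saturated_def
proof (intro ballI impI)
  fix w X
  assume w: "w \<in> F1_vertices V C V0" and X: "X \<in> D1 Ed r s C V1 w"
    and sub: "F1_s s ` X \<subseteq> Inl ` H \<union> lift H"
  obtain v where v: "w = Inl v" "v \<in> V"
    using w X by (auto simp: D1_def F1_vertices_def E1_new_vertices_def split: sum.splits)
  show "w \<in> Inl ` H \<union> lift H"
  proof (cases "v \<in> V1")
    case True
    then obtain x where x: "X = Xset r C x" "x \<in> Ed" "s x = v"
      using X v by (auto simp: D1_def C1_def)
    then have "F1_s s ` X \<subseteq> lift H" using sub by (auto simp: F1_s_image_Xset)
    with x F1_s_image_Xset_subset_lift_iff[OF assms] v show ?thesis by auto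
  next
    case False
    then obtain Y where "Y \<in> C v" "X = Inl ` Y" using X v by (auto simp: D1_def)
    moreover have "s ` Y \<subseteq> H"
    proof
      fix z assume "z \<in> s ` Y"
      with sub \<open>X = Inl ` Y\<close> have "Inl z \<in> Inl ` H \<union> lift H" by (force simp: F1_s_def)
      then show "z \<in> H" by auto
    qed
    ultimately show ?thesis using assms(2) v unfolding saturated_def by blast
  qed
qed

lemma union_lift_subset_hereditary:
  assumes "Inl ` H \<subseteq> K" "hereditary (F1_edges Ed C V0) (F1_r r s) (F1_s s) K"
  shows "Inl ` H \<union> lift H \<subseteq> K"
proof
  fix w assume "w \<in> Inl ` H \<union> lift H"
  then consider "w \<in> Inl ` H" | x S where "w = Inr (r x, S)" "x \<in> Ed" "s x \<in> H"
      "S \<in> transversals C (r x)" "x \<in> S"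
    unfolding lift_to_E1_def F1_s_image_Xset by blast
  then show "w \<in> K"
  proof cases
    case 2
    then have "Inr (x, (r x, S)) \<in> F1_edges Ed C V0"
      using ranges by (auto simp: F1_edges_def E1_edges_def)
    with 2 assms show ?thesis
      unfolding hereditary_def F1_r_def F1_s_def by force
  qed (use assms in blast)
qed

end

lemma hered_closure_eqI:
  assumes "A \<subseteq> K" "K \<subseteq> V" "hereditary Ed r s K"
    and "\<And>K'. A \<subseteq> K' \<Longrightarrow> hereditary Ed r s K' \<Longrightarrow> K \<subseteq> K'"
  shows "hered_closure V Ed r s A = K"
  unfolding hered_closure_def
proof (rule antisym)
  show "\<Inter>{K'. A \<subseteq> K' \<and> K' \<subseteq> V \<and> hereditary Ed r s K'} \<subseteq> K"
    using assms(1-3) by (intro Inter_lower) simp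
  show "K \<subseteq> \<Inter>{K'. A \<subseteq> K' \<and> K' \<subseteq> V \<and> hereditary Ed r s K'}"
    using assms(4) by (intro Inter_greatest) simp
qed

theorem lemma5:
  fixes V :: "'v set" and Ed :: "'e set" and r s :: "'e \<Rightarrow> 'v"
    and C :: "'v \<Rightarrow> 'e set set" and V0 V1 H :: "'v set"
  assumes "finite_bipartite_sep V Ed r s C V0 V1"
    and "H \<in> HS V Ed r s C"
  defines "H1 \<equiv> \<Union>{F1_s s ` Xset r C x | x. x \<in> Ed \<and> s x \<in> H} \<union> Inl ` (H \<inter> V1)"
  shows "H1 \<in> HS (E1_vertices C V0 V1) (E1_edges C V0) (F1_r r s) (F1_s s) (C1 Ed r s C V1) \<and>
         Inl ` H \<union> H1 \<in> HS (F1_vertices V C V0) (F1_edges Ed C V0) (F1_r r s) (F1_s s) (D1 Ed r s C V1) \<and>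
         Inl ` H \<union> H1 = hered_closure (F1_vertices V C V0) (F1_edges Ed C V0) (F1_r r s) (F1_s s) (Inl ` H)"
proof -
  have "bipartite_separated_graph V Ed r s C V0 V1"
    using assms(1) unfolding finite_bipartite_sep_def bipartite_separated_graph_def by blast
  then interpret bipartite_separated_graph V Ed r s C V0 V1 .
  have HV: "H \<subseteq> V" and her: "hereditary Ed r s H" and sat: "saturated V s C H"
    using assms(2) unfolding HS_def by auto
  have H1: "H1 = lift_to_E1 Ed r s C V1 H" unfolding H1_def lift_to_E1_def ..
  have union_subset: "Inl ` H \<union> H1 \<subseteq> F1_vertices V C V0"
    using HV vertices lift_to_E1_subset[of H]
    unfolding H1 F1_vertices_def E1_vertices_def by blast
  have union_hereditary: "hereditary (F1_edges Ed C V0) (F1_r r s) (F1_s s) (Inl ` H \<union> H1)"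
    unfolding H1 by (rule union_lift_hereditary[OF her])
  have "Inl ` H \<union> H1 \<in> HS (F1_vertices V C V0) (F1_edges Ed C V0) (F1_r r s) (F1_s s) (D1 Ed r s C V1)"
    using union_subset union_hereditary union_lift_saturated[OF her sat]
    unfolding HS_def H1 by blast
  moreover have "hered_closure (F1_vertices V C V0) (F1_edges Ed C V0) (F1_r r s) (F1_s s) (Inl ` H)
      = Inl ` H \<union> H1"
    using union_subset union_hereditary union_lift_subset_hereditary
    by (intro hered_closure_eqI) (auto simp: H1)
  ultimately show ?thesis
    using lift_to_E1_in_HS[OF her sat] unfolding H1 by simp
qed

end
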